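(* Let $G$ be a path graph with $L$ edges rooted at a vertex $O$ that is not an endpoint, and let all edges have activation probability $p\in(0,1]$. Then the value of the stochastic search game is $$\mathrm{val}(p)=\frac{L}{p}+\frac{1}{1-(1-p)^2}-\frac1p.$$ Moreover, the following are optimal strategies: - for the hider, the distribution putting mass $\lambda_i/L$ on the extreme edge of side $i$, where $\lambda_i$ is the number of edges on side $i$ of $O$; - for the searcher, the uniform depth-first strategy.
   Context: Setting: the stochastic search game on $G$. Every edge has length $1$ and is active at each stage independently with probability $p$. The hider chooses an edge and stays there. The searcher starts at $O$; at each stage, knowing which edges are currently active, she waits or traverses an active edge incident to her position. The hider's payoff is the expected first time the searcher traverses his edge. Uniform depth-first strategy, with edges oriented away from $O$: at the current vertex, - if some untraversed outgoing edge is active, take one chosen uniformly among the active untraversed outgoing edges; - if all untraversed outgoing edges are inactive, wait; - once all outgoing edges have been traversed, go back toward $O$ when that edge is active, and wait otherwise. *)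

theory Defs
  imports "HOL-Probability.Probability"
begin

text \<open>
The path has a edges on side 1 and b edges on side 2 (a, b \<ge> 1, L = a + b).
Vertices are the integers -b..a, the root O is the vertex 0.
The edge with label e joins the vertices e and e+1; the edge set is {-b ..< a}.
Every edge has length 1; at each stage each edge is active independently with
probability p.
\<close>

definition path_edges :: "nat \<Rightarrow> nat \<Rightarrow> int set" where
  "path_edges a b = {- int b ..< int a}"

definition parent_end :: "int \<Rightarrow> int" where
  "parent_end e = (if 0 \<le> e then e else e + 1)"

definition child_end :: "int \<Rightarrow> int" where
  "child_end e = (if 0 \<le> e then e + 1 else e)"

definition crosses :: "int \<Rightarrow> int \<Rightarrow> int \<Rightarrow> bool" where
  "crosses e u v \<longleftrightarrow> u \<noteq> v \<and> {u, v} = {e, e + 1}"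

text \<open>A history records, for each past stage, the set of active edges and the
searcher's position after that stage. The searcher starts at O = 0.\<close>
type_synonym history = "(int set \<times> int) list"

text \<open>A (behavioural, possibly randomised) searcher strategy: given the full past
and the currently active edges, a distribution over the next position.\<close>
type_synonym strategy = "history \<Rightarrow> int set \<Rightarrow> int pmf"

definition cur_pos :: "history \<Rightarrow> int" where
  "cur_pos h = last (0 # map snd h)"

definition legal_move :: "nat \<Rightarrow> nat \<Rightarrow> int set \<Rightarrow> int \<Rightarrow> int \<Rightarrow> bool" where
  "legal_move a b A u v \<longleftrightarrow> v = u \<or> (\<exists>e \<in> A \<inter> path_edges a b. crosses e u v)"

definition valid_strategy :: "nat \<Rightarrow> nat \<Rightarrow> strategy \<Rightarrow> bool" where
  "valid_strategy a b \<sigma> \<longleftrightarrow>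
     (\<forall>h A. \<forall>v \<in> set_pmf (\<sigma> h A). legal_move a b A (cur_pos h) v)"

definition traversed_in :: "int \<Rightarrow> history \<Rightarrow> bool" where
  "traversed_in e h \<longleftrightarrow>
     (\<exists>s < length h. crosses e ((0 # map snd h) ! s) (map snd h ! s))"

definition traversed_set :: "nat \<Rightarrow> nat \<Rightarrow> history \<Rightarrow> int set" where
  "traversed_set a b h = {e \<in> path_edges a b. traversed_in e h}"

definition activation :: "real \<Rightarrow> nat \<Rightarrow> nat \<Rightarrow> int set pmf" where
  "activation p a b =
     map_pmf (\<lambda>f. {e \<in> path_edges a b. f e})
       (Pi_pmf (path_edges a b) False (\<lambda>_. bernoulli_pmf p))"

fun run :: "real \<Rightarrow> nat \<Rightarrow> nat \<Rightarrow> strategy \<Rightarrow> nat \<Rightarrow> history pmf" where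
  "run p a b \<sigma> 0 = return_pmf []"
| "run p a b \<sigma> (Suc t) =
     bind_pmf (run p a b \<sigma> t) (\<lambda>h.
       bind_pmf (activation p a b) (\<lambda>A.
         map_pmf (\<lambda>v. h @ [(A, v)]) (\<sigma> h A)))"

text \<open>Expected first time T_e at which the searcher traverses edge e
(T_e \<in> {1,2,...,\<infinity>}), written as E[T_e] = \<Sum>_{t\<ge>0} P(T_e > t),
where T_e > t iff e has not been traversed in the first t stages.\<close>
definition search_time :: "real \<Rightarrow> nat \<Rightarrow> nat \<Rightarrow> strategy \<Rightarrow> int \<Rightarrow> ennreal" where
  "search_time p a b \<sigma> e =
     (\<Sum>t. ennreal (measure_pmf.prob (run p a b \<sigma> t) {h. \<not> traversed_in e h}))"

definition hider_strategies :: "nat \<Rightarrow> nat \<Rightarrow> int pmf set" where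
  "hider_strategies a b = {\<eta>. set_pmf \<eta> \<subseteq> path_edges a b}"

definition payoff :: "real \<Rightarrow> nat \<Rightarrow> nat \<Rightarrow> int pmf \<Rightarrow> strategy \<Rightarrow> ennreal" where
  "payoff p a b \<eta> \<sigma> = (\<Sum>e \<in> path_edges a b. ennreal (pmf \<eta> e) * search_time p a b \<sigma> e)"

definition lower_value :: "real \<Rightarrow> nat \<Rightarrow> nat \<Rightarrow> ennreal" where
  "lower_value p a b =
     (SUP \<eta> \<in> hider_strategies a b. INF \<sigma> \<in> Collect (valid_strategy a b). payoff p a b \<eta> \<sigma>)"

definition upper_value :: "real \<Rightarrow> nat \<Rightarrow> nat \<Rightarrow> ennreal" where
  "upper_value p a b =
     (INF \<sigma> \<in> Collect (valid_strategy a b). SUP \<eta> \<in> hider_strategies a b. payoff p a b \<eta> \<sigma>)"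

definition game_value :: "real \<Rightarrow> nat \<Rightarrow> nat \<Rightarrow> ennreal \<Rightarrow> bool" where
  "game_value p a b v \<longleftrightarrow> lower_value p a b = v \<and> upper_value p a b = v"

definition hider_optimal :: "real \<Rightarrow> nat \<Rightarrow> nat \<Rightarrow> ennreal \<Rightarrow> int pmf \<Rightarrow> bool" where
  "hider_optimal p a b v \<eta> \<longleftrightarrow> \<eta> \<in> hider_strategies a b \<and>
     (\<forall>\<sigma>. valid_strategy a b \<sigma> \<longrightarrow> v \<le> payoff p a b \<eta> \<sigma>)"

definition searcher_optimal :: "real \<Rightarrow> nat \<Rightarrow> nat \<Rightarrow> ennreal \<Rightarrow> strategy \<Rightarrow> bool" where
  "searcher_optimal p a b v \<sigma> \<longleftrightarrow> valid_strategy a b \<sigma> \<and>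
     (\<forall>\<eta> \<in> hider_strategies a b. payoff p a b \<eta> \<sigma> \<le> v)"

text \<open>Hider: mass a/L on the extreme edge of side 1 (edge a-1, joining a-1 and a)
and mass b/L on the extreme edge of side 2 (edge -b, joining -b and -b+1).\<close>
definition extreme_hider :: "nat \<Rightarrow> nat \<Rightarrow> int pmf" where
  "extreme_hider a b =
     map_pmf (\<lambda>x. if x then int a - 1 else - int b) (bernoulli_pmf (real a / real (a + b)))"

definition uniform_dfs :: "nat \<Rightarrow> nat \<Rightarrow> strategy" where
  "uniform_dfs a b h A =
     (let u = cur_pos h;
          E = path_edges a b;
          Out = {e \<in> E. parent_end e = u} - traversed_set a b h
      in if Out \<inter> A \<noteq> {} then map_pmf child_end (pmf_of_set (Out \<inter> A))
         else if Out \<noteq> {} then return_pmf u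
         else if (\<exists>e \<in> E \<inter> A. child_end e = u)
              then return_pmf (parent_end (THE e. e \<in> E \<and> child_end e = u))
         else return_pmf u)"

end

(*
  Both bounds compare a potential on histories with its expectation one
  stage later.

  The uniform depth-first searcher waits 1/(1 - (1 - p)^2) stages in expectation until a root edge
  is active, enters either side with probability 1/2, and from then on follows a fixed tour of
  length 2(a + b), each step of which waits 1/p stages in expectation. An edge first traversed at
  step k of one tour and k' of the other is found after 1/(1 - (1 - p)^2) + (k + k' - 2)/(2p) <= v
  stages in expectation.

  Against the hider on the extreme edge of each side with probability proportional to its length,
  the searcher pays per stage the probability that the hider is still unfound. A potential that
  depends only on her position and on which extreme edges she has traversed starts at v and
  decreases in expectation by at most this cost per stage, so the total cost is at least v.
*)

theory Submission
  imports Defs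
begin

lemma finite_path_edges [simp]: "finite (path_edges a b)"
  by (simp add: path_edges_def)

lemma mem_path_edges: "e \<in> path_edges a b \<longleftrightarrow> - int b \<le> e \<and> e < int a"
  by (simp add: path_edges_def)

lemma cur_pos_Nil [simp]: "cur_pos [] = 0"
  by (simp add: cur_pos_def)

lemma cur_pos_snoc [simp]: "cur_pos (h @ [(A, v)]) = v"
  by (simp add: cur_pos_def)

lemma crosses_iff: "crosses e u v \<longleftrightarrow> (u = e \<and> v = e + 1) \<or> (u = e + 1 \<and> v = e)"
  unfolding crosses_def by (auto simp: doubleton_eq_iff)

lemma traversed_in_Nil [simp]: "\<not> traversed_in e []"
  by (simp add: traversed_in_def)

lemma traversed_in_snoc:
  "traversed_in e (h @ [(A, v)]) \<longleftrightarrow> traversed_in e h \<or> crosses e (cur_pos h) v"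
proof -
  have "(0 # map snd h) ! length h = cur_pos h"
    by (simp add: cur_pos_def last_conv_nth)
  moreover have "(0 # map snd (h @ [(A, v)])) ! s = (0 # map snd h) ! s" if "s \<le> length h" for s
    using that by (cases s) (auto simp: nth_append)
  ultimately show ?thesis
    unfolding traversed_in_def by (auto simp: less_Suc_eq nth_append)
qed

lemma traversed_set_snoc:
  "traversed_set a b (h @ [(A, v)]) = traversed_set a b h \<union> {e \<in> path_edges a b. crosses e (cur_pos h) v}"
  by (auto simp: traversed_set_def traversed_in_snoc)

lemma traversed_set_stay [simp]: "traversed_set a b (h @ [(A, cur_pos h)]) = traversed_set a b h"
  by (simp add: traversed_set_snoc crosses_def)

lemma legal_move_cases:
  assumes "legal_move a b A x v"
  obtains "v = x"
    | "v = x + 1" "x \<in> A" "x \<in> path_edges a b"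
    | "v = x - 1" "x - 1 \<in> A" "x - 1 \<in> path_edges a b"
  using assms unfolding legal_move_def crosses_iff by auto

section \<open>Potential bounds on expected costs\<close>

definition stage_expectation ::
    "real \<Rightarrow> nat \<Rightarrow> nat \<Rightarrow> strategy \<Rightarrow> (history \<Rightarrow> ennreal) \<Rightarrow> history \<Rightarrow> ennreal" where
  "stage_expectation p a b \<sigma> f h = (\<integral>\<^sup>+A. \<integral>\<^sup>+v. f (h @ [(A, v)]) \<partial>\<sigma> h A \<partial>activation p a b)"

lemma nn_integral_run_Suc:
  "(\<integral>\<^sup>+h. f h \<partial>run p a b \<sigma> (Suc t)) = (\<integral>\<^sup>+h. stage_expectation p a b \<sigma> f h \<partial>run p a b \<sigma> t)"
  by (simp add: stage_expectation_def)

lemma run_invariant: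
  assumes "h \<in> set_pmf (run p a b \<sigma> t)"
    and "R []" and "\<And>h A v. R h \<Longrightarrow> v \<in> set_pmf (\<sigma> h A) \<Longrightarrow> R (h @ [(A, v)])"
  shows "R h"
  using assms by (induction t arbitrary: h) auto

lemma payoff_eq_nn_integral:
  assumes "set_pmf \<eta> \<subseteq> path_edges a b"
  shows "payoff p a b \<eta> \<sigma> = (\<integral>\<^sup>+e. search_time p a b \<sigma> e \<partial>\<eta>)"
  unfolding payoff_def using assms
  by (subst nn_integral_measure_pmf_support[of "path_edges a b"]) (auto simp: mult.commute)

lemma search_time_eq_suminf_nn_integral:
  "search_time p a b \<sigma> e = (\<Sum>t. \<integral>\<^sup>+h. indicator {h. \<not> traversed_in e h} h \<partial>run p a b \<sigma> t)"
  unfolding search_time_def by (simp add: measure_pmf.emeasure_eq_measure[symmetric])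

lemma stage_expectation_ge:
  assumes "\<And>A v. v \<in> set_pmf (\<sigma> h A) \<Longrightarrow> g A \<le> f (h @ [(A, v)])"
  shows "(\<integral>\<^sup>+A. g A \<partial>activation p a b) \<le> stage_expectation p a b \<sigma> f h"
  unfolding stage_expectation_def
proof (intro nn_integral_mono)
  fix A
  have "g A = (\<integral>\<^sup>+v. g A \<partial>\<sigma> h A)"
    by (simp add: measure_pmf.emeasure_space_1)
  also have "\<dots> \<le> (\<integral>\<^sup>+v. f (h @ [(A, v)]) \<partial>\<sigma> h A)"
    by (intro nn_integral_mono_AE AE_pmfI assms)
  finally show "g A \<le> (\<integral>\<^sup>+v. f (h @ [(A, v)]) \<partial>\<sigma> h A)" .
qed

lemma expected_cost_le_potential:
  fixes U c :: "history \<Rightarrow> ennreal"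
  assumes reach: "\<And>t h. h \<in> set_pmf (run p a b \<sigma> t) \<Longrightarrow> R h"
    and step: "\<And>h. R h \<Longrightarrow> c h + stage_expectation p a b \<sigma> U h \<le> U h"
  shows "(\<Sum>t. \<integral>\<^sup>+h. c h \<partial>run p a b \<sigma> t) \<le> U []"
proof (intro suminf_le_const summableI)
  fix n
  have "(\<Sum>t<n. \<integral>\<^sup>+h. c h \<partial>run p a b \<sigma> t) + (\<integral>\<^sup>+h. U h \<partial>run p a b \<sigma> n) \<le> U []"
  proof (induction n)
    case (Suc n)
    have "(\<Sum>t<Suc n. \<integral>\<^sup>+h. c h \<partial>run p a b \<sigma> t) + (\<integral>\<^sup>+h. U h \<partial>run p a b \<sigma> (Suc n))
       = (\<Sum>t<n. \<integral>\<^sup>+h. c h \<partial>run p a b \<sigma> t) + (\<integral>\<^sup>+h. c h + stage_expectation p a b \<sigma> U h \<partial>run p a b \<sigma> n)"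
      by (simp add: nn_integral_run_Suc nn_integral_add add.assoc del: run.simps)
    also have "\<dots> \<le> (\<Sum>t<n. \<integral>\<^sup>+h. c h \<partial>run p a b \<sigma> t) + (\<integral>\<^sup>+h. U h \<partial>run p a b \<sigma> n)"
      by (intro add_left_mono nn_integral_mono_AE AE_pmfI step reach)
    finally show ?case using Suc.IH by (rule order_trans)
  qed simp
  then show "(\<Sum>t<n. \<integral>\<^sup>+h. c h \<partial>run p a b \<sigma> t) \<le> U []"
    by (rule order_trans[rotated]) simp
qed

lemma ennreal_suminf_neq_top_LIMSEQ_zero:
  fixes s :: "nat \<Rightarrow> ennreal"
  assumes "(\<Sum>t. s t) \<noteq> \<top>"
  shows "s \<longlonglongrightarrow> 0"
proof -
  define r where "r t = enn2real (s t)" for t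
  have s: "(\<lambda>t. ennreal (r t)) = s"
    using assms by (auto simp: r_def less_top intro!: ennreal_enn2real ennreal_suminf_lessD)
  have "(\<Sum>t. ennreal (r t)) \<noteq> \<top>"
    using assms by (simp add: s)
  then have "summable r"
    by (rule summable_suminf_not_top[rotated]) (simp add: r_def)
  then have "(\<lambda>t. ennreal (r t)) \<longlonglongrightarrow> ennreal 0"
    by (intro tendsto_ennrealI summable_LIMSEQ_zero)
  then show ?thesis
    by (simp add: s)
qed

text \<open>Bounding U by a multiple of the cost makes the potential left over after n stages vanish
  as n grows.\<close>

lemma potential_le_expected_cost:
  fixes U c :: "history \<Rightarrow> ennreal"
  assumes reach: "\<And>t h. h \<in> set_pmf (run p a b \<sigma> t) \<Longrightarrow> R h"
    and step: "\<And>h. R h \<Longrightarrow> U h \<le> c h + stage_expectation p a b \<sigma> U h"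
    and bound: "\<And>h. R h \<Longrightarrow> U h \<le> K * c h"
    and K: "K \<noteq> \<top>"
  shows "U [] \<le> (\<Sum>t. \<integral>\<^sup>+h. c h \<partial>run p a b \<sigma> t)"
proof -
  define s where "s t = (\<integral>\<^sup>+h. c h \<partial>run p a b \<sigma> t)" for t
  have partial: "U [] \<le> (\<Sum>t<n. s t) + (\<integral>\<^sup>+h. U h \<partial>run p a b \<sigma> n)" for n
  proof (induction n)
    case (Suc n)
    have "(\<integral>\<^sup>+h. U h \<partial>run p a b \<sigma> n) \<le> (\<integral>\<^sup>+h. c h + stage_expectation p a b \<sigma> U h \<partial>run p a b \<sigma> n)"
      by (intro nn_integral_mono_AE AE_pmfI step reach)
    also have "\<dots> = s n + (\<integral>\<^sup>+h. U h \<partial>run p a b \<sigma> (Suc n))"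
      by (simp add: nn_integral_run_Suc nn_integral_add s_def del: run.simps)
    finally show ?case
      using Suc.IH by (simp add: add.assoc) (meson add_left_mono order_trans)
  qed simp
  have remainder: "(\<integral>\<^sup>+h. U h \<partial>run p a b \<sigma> n) \<le> K * s n" for n
  proof -
    have "(\<integral>\<^sup>+h. U h \<partial>run p a b \<sigma> n) \<le> (\<integral>\<^sup>+h. K * c h \<partial>run p a b \<sigma> n)"
      by (intro nn_integral_mono_AE AE_pmfI bound reach)
    then show ?thesis by (simp add: nn_integral_cmult s_def)
  qed
  show ?thesis
  proof (cases "(\<Sum>t. s t) = \<top>")
    case False
    have "(\<lambda>n. (\<Sum>t<n. s t) + K * s n) \<longlonglongrightarrow> (\<Sum>t. s t) + K * 0"
      using K ennreal_suminf_neq_top_LIMSEQ_zero[OF False]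
      by (intro tendsto_add summable_LIMSEQ summableI ennreal_tendsto_cmult) (auto simp: top.not_eq_extremum)
    moreover have "U [] \<le> (\<Sum>t<n. s t) + K * s n" for n
      using partial[of n] remainder[of n] by (meson add_left_mono order_trans)
    ultimately have "U [] \<le> (\<Sum>t. s t) + K * 0"
      by (intro LIMSEQ_le_const) auto
    then show ?thesis by (simp add: s_def)
  qed (simp add: s_def)
qed

lemma activation_edge_marginal:
  assumes "e \<in> path_edges a b"
  shows "map_pmf (\<lambda>A. e \<in> A) (activation p a b) = bernoulli_pmf p"
  using assms by (simp add: activation_def pmf.map_comp o_def Pi_pmf_component)

lemma activation_edge_pair_marginal:
  assumes "e \<in> path_edges a b" "e' \<in> path_edges a b" "e \<noteq> e'"
  shows "map_pmf (\<lambda>A. (e \<in> A, e' \<in> A)) (activation p a b) = pair_pmf (bernoulli_pmf p) (bernoulli_pmf p)"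
proof -
  let ?B = "\<lambda>_::int. bernoulli_pmf p"
  have "map_pmf (\<lambda>A. (e \<in> A, e' \<in> A)) (activation p a b)
      = map_pmf (\<lambda>f. (f e, f e')) (Pi_pmf {e, e'} False ?B)"
    using assms unfolding activation_def pmf.map_comp o_def
    by (subst Pi_pmf_subset[of "path_edges a b" "{e, e'}"]) (auto simp: pmf.map_comp o_def)
  also have "\<dots> = pair_pmf (bernoulli_pmf p) (bernoulli_pmf p)"
    using assms by (simp add: Pi_pmf_insert Pi_pmf_singleton pair_map_pmf2 pmf.map_comp o_def case_prod_unfold)
  finally show ?thesis .
qed

lemma ennreal_convex_combination:
  fixes x y p :: real
  assumes "0 \<le> x" "0 \<le> y" "0 \<le> p" "p \<le> 1"
  shows "ennreal x * ennreal p + ennreal y * ennreal (1 - p) = ennreal (x * p + y * (1 - p))"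
  using assms by (simp add: ennreal_mult ennreal_plus)

lemma one_minus_square_pos: "0 < (p::real) \<Longrightarrow> p \<le> 1 \<Longrightarrow> 0 < 1 - (1 - p)^2"
  by (simp add: abs_square_less_1)

lemma nn_integral_activation_edge:
  assumes "e \<in> path_edges a b" "0 \<le> p" "p \<le> 1" "\<And>u. 0 \<le> g u"
  shows "(\<integral>\<^sup>+A. ennreal (g (e \<in> A)) \<partial>activation p a b) = ennreal (g True * p + g False * (1 - p))"
proof -
  have "(\<integral>\<^sup>+A. ennreal (g (e \<in> A)) \<partial>activation p a b)
      = (\<integral>\<^sup>+u. ennreal (g u) \<partial>map_pmf (\<lambda>A. e \<in> A) (activation p a b))"
    by simp
  then show ?thesis
    using assms by (simp add: activation_edge_marginal ennreal_convex_combination)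
qed

lemma nn_integral_activation_edge_pair:
  assumes "e \<in> path_edges a b" "e' \<in> path_edges a b" "e \<noteq> e'" "0 \<le> p" "p \<le> 1" "\<And>u w. 0 \<le> g u w"
  shows "(\<integral>\<^sup>+A. ennreal (g (e \<in> A) (e' \<in> A)) \<partial>activation p a b) =
     ennreal ((g True True * p + g True False * (1 - p)) * p + (g False True * p + g False False * (1 - p)) * (1 - p))"
proof -
  have "(\<integral>\<^sup>+A. ennreal (g (e \<in> A) (e' \<in> A)) \<partial>activation p a b)
      = (\<integral>\<^sup>+x. ennreal (case_prod g x) \<partial>map_pmf (\<lambda>A. (e \<in> A, e' \<in> A)) (activation p a b))"
    by simp
  also have "\<dots> = ennreal (g True True * p + g True False * (1 - p)) * ennreal p
      + ennreal (g False True * p + g False False * (1 - p)) * ennreal (1 - p)"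
    using assms by (simp add: activation_edge_pair_marginal nn_integral_pair_pmf' ennreal_convex_combination)
  also have "\<dots> = ennreal ((g True True * p + g True False * (1 - p)) * p + (g False True * p + g False False * (1 - p)) * (1 - p))"
    using assms by (intro ennreal_convex_combination add_nonneg_nonneg mult_nonneg_nonneg) auto
  finally show ?thesis .
qed

section \<open>The extreme hider\<close>

text \<open>The searcher is at x, and f1, f2 record whether the extreme edges a - 1 and -b have been
  traversed. For q = root_delay p a b and divided by p (a + b), the potential bounds the expected
  remaining cost from below: once one extreme edge is found, the cost per stage of the other one
  times the distance still to walk, at an expected 1/p stages per edge; at the root,
  q/(p (a + b)) = 1/(1 - (1 - p)^2) is the expected wait for one of the two root edges. A stage
  lowers the potential by at most the drop, and only if it crosses the progress edge (either root
  edge at the start).\<close>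

definition hider_potential :: "nat \<Rightarrow> nat \<Rightarrow> real \<Rightarrow> int \<Rightarrow> bool \<Rightarrow> bool \<Rightarrow> real" where
  "hider_potential a b q x f1 f2 =
     (if f1 \<and> f2 then 0
      else if f1 then real b * (x + b)
      else if f2 then real a * (a - x)
      else if x = 0 then (real a + b) * (real a + b - 1) + q
      else (real a + b) * (real a + b - \<bar>x\<bar>))"

definition hider_potential_drop :: "nat \<Rightarrow> nat \<Rightarrow> real \<Rightarrow> int \<Rightarrow> bool \<Rightarrow> bool \<Rightarrow> real" where
  "hider_potential_drop a b q x f1 f2 =
     (if f1 \<and> f2 then 0 else if f1 then real b else if f2 then real a
      else if x = 0 then q else real a + b)"

definition progress_edge :: "int \<Rightarrow> bool \<Rightarrow> bool \<Rightarrow> int" where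
  "progress_edge x f1 f2 = (if f1 then x - 1 else if f2 then x else if 0 < x then x else x - 1)"

definition progress_enabled :: "int \<Rightarrow> bool \<Rightarrow> bool \<Rightarrow> int set \<Rightarrow> bool" where
  "progress_enabled x f1 f2 A \<longleftrightarrow>
     (if \<not> f1 \<and> \<not> f2 \<and> x = 0 then 0 \<in> A \<or> -1 \<in> A else progress_edge x f1 f2 \<in> A)"

definition progress_probability :: "real \<Rightarrow> int \<Rightarrow> bool \<Rightarrow> bool \<Rightarrow> real" where
  "progress_probability p x f1 f2 = (if \<not> f1 \<and> \<not> f2 \<and> x = 0 then 1 - (1 - p)^2 else p)"

lemma hider_potential_step_up:
  assumes ab: "1 \<le> a" "1 \<le> b" and q: "0 \<le> q" and x: "- int b \<le> x" "x < int a"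
  shows "hider_potential a b q x f1 f2
           - hider_potential_drop a b q x f1 f2 * of_bool (progress_edge x f1 f2 = x \<or> \<not> f1 \<and> \<not> f2 \<and> x = 0)
         \<le> hider_potential a b q (x + 1) (f1 \<or> x = int a - 1) f2"
proof (cases "x = int a - 1")
  case True
  then show ?thesis
    using ab q by (cases f1; cases f2) (auto simp: True hider_potential_def hider_potential_drop_def progress_edge_def algebra_simps)
next
  case False
  then show ?thesis
    using ab q x by (cases f1; cases f2; cases "x = 0"; cases "x < 0"; cases "x = -1")
      (auto simp: hider_potential_def hider_potential_drop_def progress_edge_def algebra_simps)
qed

lemma hider_potential_step_down:
  assumes ab: "1 \<le> a" "1 \<le> b" and q: "0 \<le> q" and x: "- int b < x" "x \<le> int a"
  shows "hider_potential a b q x f1 f2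
           - hider_potential_drop a b q x f1 f2 * of_bool (progress_edge x f1 f2 = x - 1 \<or> \<not> f1 \<and> \<not> f2 \<and> x = 0)
         \<le> hider_potential a b q (x - 1) f1 (f2 \<or> x = - int b + 1)"
proof (cases "x = - int b + 1")
  case True
  then show ?thesis
    using ab q by (cases f1; cases f2) (auto simp: True hider_potential_def hider_potential_drop_def progress_edge_def algebra_simps)
next
  case False
  then show ?thesis
    using ab q x by (cases f1; cases f2; cases "x = 0"; cases "x > 0"; cases "x = 1")
      (auto simp: hider_potential_def hider_potential_drop_def progress_edge_def algebra_simps)
qed

lemma hider_potential_drop_nonneg: "0 \<le> q \<Longrightarrow> 0 \<le> hider_potential_drop a b q x f1 f2"
  by (simp add: hider_potential_drop_def)

lemma hider_potential_move:
  assumes ab: "1 \<le> a" "1 \<le> b" and q: "0 \<le> q"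
    and x: "- int b \<le> x" "x \<le> int a" "x = int a \<longrightarrow> f1" "x = - int b \<longrightarrow> f2"
    and move: "legal_move a b A x v"
  shows "hider_potential a b q x f1 f2 - hider_potential_drop a b q x f1 f2 * of_bool (progress_enabled x f1 f2 A)
     \<le> hider_potential a b q v (f1 \<or> crosses (int a - 1) x v) (f2 \<or> crosses (- int b) x v)"
  using move
proof (cases rule: legal_move_cases)
  case 1
  then show ?thesis
    using hider_potential_drop_nonneg[OF q] by (simp add: crosses_def)
next
  case 2
  have "hider_potential_drop a b q x f1 f2 * of_bool (progress_edge x f1 f2 = x \<or> \<not> f1 \<and> \<not> f2 \<and> x = 0)
      \<le> hider_potential_drop a b q x f1 f2 * of_bool (progress_enabled x f1 f2 A)"
    using 2 by (intro mult_left_mono hider_potential_drop_nonneg[OF q]) (auto simp: progress_enabled_def)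
  moreover have "x < int a"
    using 2 by (simp add: mem_path_edges)
  ultimately have "hider_potential a b q x f1 f2 - hider_potential_drop a b q x f1 f2 * of_bool (progress_enabled x f1 f2 A)
      \<le> hider_potential a b q (x + 1) (f1 \<or> x = int a - 1) f2"
    using hider_potential_step_up[OF ab q x(1), of f1 f2] by linarith
  moreover have "(f1 \<or> crosses (int a - 1) x v) = (f1 \<or> x = int a - 1)" "(f2 \<or> crosses (- int b) x v) = f2"
    using 2 x by (auto simp: crosses_iff)
  ultimately show ?thesis
    using 2 by simp
next
  case 3
  have "hider_potential_drop a b q x f1 f2 * of_bool (progress_edge x f1 f2 = x - 1 \<or> \<not> f1 \<and> \<not> f2 \<and> x = 0)
      \<le> hider_potential_drop a b q x f1 f2 * of_bool (progress_enabled x f1 f2 A)"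
    using 3 by (intro mult_left_mono hider_potential_drop_nonneg[OF q]) (auto simp: progress_enabled_def)
  moreover have "- int b < x"
    using 3 by (simp add: mem_path_edges)
  ultimately have "hider_potential a b q x f1 f2 - hider_potential_drop a b q x f1 f2 * of_bool (progress_enabled x f1 f2 A)
      \<le> hider_potential a b q (x - 1) f1 (f2 \<or> x = - int b + 1)"
    using hider_potential_step_down[OF ab q _ x(2), of f1 f2] by linarith
  moreover have "(f1 \<or> crosses (int a - 1) x v) = f1" "(f2 \<or> crosses (- int b) x v) = (f2 \<or> x = - int b + 1)"
    using 3 x by (auto simp: crosses_iff)
  ultimately show ?thesis
    using 3 by simp
qed

lemma hider_potential_drop_le:
  assumes ab: "1 \<le> a" "1 \<le> b" and q: "0 \<le> q"
    and x: "- int b \<le> x" "x \<le> int a" "x = int a \<longrightarrow> f1" "x = - int b \<longrightarrow> f2"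
  shows "hider_potential_drop a b q x f1 f2 \<le> hider_potential a b q x f1 f2"
proof -
  have L: "real a \<ge> 1" "real b \<ge> 1"
    using ab by auto
  show ?thesis
  proof (cases f1; cases f2)
    assume "f1" "\<not> f2"
    then have "1 - real b \<le> real_of_int x"
      using x by linarith
    then have "real b * 1 \<le> real b * (real_of_int x + real b)"
      using L by (intro mult_left_mono) auto
    then show ?thesis
      using \<open>f1\<close> \<open>\<not> f2\<close> by (simp add: hider_potential_drop_def hider_potential_def)
  next
    assume "\<not> f1" "f2"
    then have "real_of_int x \<le> real a - 1"
      using x by linarith
    then have "real a * 1 \<le> real a * (real a - real_of_int x)"
      using L by (intro mult_left_mono) auto
    then show ?thesis
      using \<open>\<not> f1\<close> \<open>f2\<close> by (simp add: hider_potential_drop_def hider_potential_def)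
  next
    assume "\<not> f1" "\<not> f2"
    then have "\<bar>real_of_int x\<bar> \<le> real a + real b - 1"
      using x by (auto simp: abs_if)
    then have "(real a + real b) * 1 \<le> (real a + real b) * (real a + real b - \<bar>real_of_int x\<bar>)"
      using L by (intro mult_left_mono) auto
    moreover have "0 \<le> (real a + real b) * (real a + real b - 1)"
      using L by simp
    ultimately show ?thesis
      using \<open>\<not> f1\<close> \<open>\<not> f2\<close> q by (simp add: hider_potential_drop_def hider_potential_def)
  qed (simp add: hider_potential_drop_def hider_potential_def)
qed

lemma hider_potential_le:
  assumes ab: "1 \<le> a" "1 \<le> b" and q: "0 \<le> q" and x: "- int b \<le> x" "x \<le> int a"
  shows "hider_potential a b q x f1 f2 \<le> (real a + real b) * (real a + real b) + q"
proof -
  have "real b * (real_of_int x + real b) \<le> (real a + real b) * (real a + real b)"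
    "real a * (real a - real_of_int x) \<le> (real a + real b) * (real a + real b)"
    "(real a + real b) * (real a + real b - \<bar>real_of_int x\<bar>) \<le> (real a + real b) * (real a + real b)"
    "(real a + real b) * (real a + real b - 1) \<le> (real a + real b) * (real a + real b)"
    using x ab by (auto intro!: mult_mono)
  then show ?thesis
    using q by (auto simp: hider_potential_def)
qed

definition search_invariant :: "nat \<Rightarrow> nat \<Rightarrow> history \<Rightarrow> bool" where
  "search_invariant a b h \<longleftrightarrow> - int b \<le> cur_pos h \<and> cur_pos h \<le> int a \<and>
     (cur_pos h = int a \<longrightarrow> traversed_in (int a - 1) h) \<and> (cur_pos h = - int b \<longrightarrow> traversed_in (- int b) h)"

lemma search_invariant_Nil: "1 \<le> a \<Longrightarrow> 1 \<le> b \<Longrightarrow> search_invariant a b []"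
  by (simp add: search_invariant_def)

lemma search_invariant_run:
  assumes "1 \<le> a" "1 \<le> b" "valid_strategy a b \<sigma>" and "h \<in> set_pmf (run p a b \<sigma> t)"
  shows "search_invariant a b h"
  using assms(4)
proof (rule run_invariant)
  fix h A v
  assume h: "search_invariant a b h" and v: "v \<in> set_pmf (\<sigma> h A)"
  then have "legal_move a b A (cur_pos h) v"
    using assms(3) by (auto simp: valid_strategy_def)
  then show "search_invariant a b (h @ [(A, v)])"
    using h by (cases rule: legal_move_cases) (auto simp: search_invariant_def mem_path_edges traversed_in_snoc crosses_iff)
qed (rule search_invariant_Nil[OF assms(1,2)])

lemma progress_edge_mem:
  assumes "- int b \<le> x" "x \<le> int a" "x = int a \<longrightarrow> f1" "x = - int b \<longrightarrow> f2" "\<not> (f1 \<and> f2)"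
    and "\<not> (\<not> f1 \<and> \<not> f2 \<and> x = 0)"
  shows "progress_edge x f1 f2 \<in> path_edges a b"
  using assms by (auto simp: progress_edge_def mem_path_edges)

lemma nn_integral_activation_progress:
  assumes ab: "1 \<le> a" "1 \<le> b" and p: "0 \<le> p" "p \<le> 1"
    and x: "- int b \<le> x" "x \<le> int a" "x = int a \<longrightarrow> f1" "x = - int b \<longrightarrow> f2" "\<not> (f1 \<and> f2)"
    and XY: "0 \<le> X" "0 \<le> Y"
  shows "(\<integral>\<^sup>+A. ennreal (if progress_enabled x f1 f2 A then X else Y) \<partial>activation p a b)
    = ennreal (X * progress_probability p x f1 f2 + Y * (1 - progress_probability p x f1 f2))"
proof (cases "\<not> f1 \<and> \<not> f2 \<and> x = 0")
  case True
  have "0 \<in> path_edges a b" "-1 \<in> path_edges a b"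
    using ab by (auto simp: mem_path_edges)
  then have "(\<integral>\<^sup>+A. ennreal (if 0 \<in> A \<or> -1 \<in> A then X else Y) \<partial>activation p a b)
      = ennreal ((X * p + X * (1 - p)) * p + (X * p + Y * (1 - p)) * (1 - p))"
    using nn_integral_activation_edge_pair[of 0 a b "-1" p "\<lambda>u w. if u \<or> w then X else Y"] p XY by simp
  then show ?thesis
    using True by (simp add: progress_enabled_def progress_probability_def power2_eq_square algebra_simps)
next
  case False
  have "(\<integral>\<^sup>+A. ennreal (if progress_edge x f1 f2 \<in> A then X else Y) \<partial>activation p a b)
      = ennreal (X * p + Y * (1 - p))"
    using nn_integral_activation_edge[OF progress_edge_mem[OF x False], of p "\<lambda>u. if u then X else Y"] p XY
    by simp
  moreover have "progress_enabled x f1 f2 A \<longleftrightarrow> progress_edge x f1 f2 \<in> A" for A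
    using False unfolding progress_enabled_def by presburger
  moreover have "progress_probability p x f1 f2 = p"
    using False by (auto simp: progress_probability_def)
  ultimately show ?thesis
    by simp
qed

definition root_delay :: "real \<Rightarrow> nat \<Rightarrow> nat \<Rightarrow> real" where
  "root_delay p a b = (real a + real b) * p / (1 - (1 - p)^2)"

definition extremes_cost :: "nat \<Rightarrow> nat \<Rightarrow> bool \<Rightarrow> bool \<Rightarrow> real" where
  "extremes_cost a b f1 f2 = (if f1 then 0 else real a / (real a + real b)) + (if f2 then 0 else real b / (real a + real b))"

definition hider_cost :: "nat \<Rightarrow> nat \<Rightarrow> history \<Rightarrow> ennreal" where
  "hider_cost a b h = ennreal (extremes_cost a b (traversed_in (int a - 1) h) (traversed_in (- int b) h))"

definition hider_value :: "real \<Rightarrow> nat \<Rightarrow> nat \<Rightarrow> history \<Rightarrow> ennreal" where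
  "hider_value p a b h = ennreal (hider_potential a b (root_delay p a b) (cur_pos h)
      (traversed_in (int a - 1) h) (traversed_in (- int b) h) / (p * (real a + real b)))"

lemma root_delay_nonneg: "0 < p \<Longrightarrow> p \<le> 1 \<Longrightarrow> 0 \<le> root_delay p a b"
  using one_minus_square_pos[of p] by (simp add: root_delay_def)

lemma expected_drop_le_extremes_cost:
  assumes p: "0 < p" "p \<le> 1" and ab: "1 \<le> a" "1 \<le> b" and f: "\<not> (f1 \<and> f2)"
  shows "hider_potential_drop a b (root_delay p a b) x f1 f2 * progress_probability p x f1 f2 / (p * (real a + real b))
    \<le> extremes_cost a b f1 f2"
proof (cases "\<not> f1 \<and> \<not> f2 \<and> x = 0")
  case True
  then show ?thesis
    using p ab one_minus_square_pos[OF p] by (simp add: hider_potential_drop_def progress_probability_def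
        root_delay_def extremes_cost_def add_divide_distrib[symmetric])
next
  case False
  then show ?thesis
    using p ab f by (auto simp: hider_potential_drop_def progress_probability_def extremes_cost_def
        add_divide_distrib[symmetric])
qed

lemma hider_value_move:
  assumes p: "0 < p" "p \<le> 1" and ab: "1 \<le> a" "1 \<le> b" and h: "search_invariant a b h"
    and move: "legal_move a b A (cur_pos h) v"
  defines "x \<equiv> cur_pos h" and "f1 \<equiv> traversed_in (int a - 1) h" and "f2 \<equiv> traversed_in (- int b) h"
    and "q \<equiv> root_delay p a b"
  shows "ennreal ((hider_potential a b q x f1 f2 - hider_potential_drop a b q x f1 f2 * of_bool (progress_enabled x f1 f2 A))
      / (p * (real a + real b))) \<le> hider_value p a b (h @ [(A, v)])"
proof -
  have "- int b \<le> x" "x \<le> int a" "x = int a \<longrightarrow> f1" "x = - int b \<longrightarrow> f2"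
    using h by (auto simp: search_invariant_def x_def f1_def f2_def)
  from hider_potential_move[OF ab _ this move[folded x_def]] root_delay_nonneg[OF p]
  have "hider_potential a b q x f1 f2 - hider_potential_drop a b q x f1 f2 * of_bool (progress_enabled x f1 f2 A)
      \<le> hider_potential a b q v (traversed_in (int a - 1) (h @ [(A, v)])) (traversed_in (- int b) (h @ [(A, v)]))"
    by (simp add: q_def x_def f1_def f2_def traversed_in_snoc)
  then show ?thesis
    using p ab by (simp add: hider_value_def q_def ennreal_leI divide_right_mono)
qed

lemma hider_value_expectation_ge:
  assumes p: "0 < p" "p \<le> 1" and ab: "1 \<le> a" "1 \<le> b" and \<sigma>: "valid_strategy a b \<sigma>"
    and h: "search_invariant a b h"
  defines "x \<equiv> cur_pos h" and "f1 \<equiv> traversed_in (int a - 1) h" and "f2 \<equiv> traversed_in (- int b) h"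
    and "q \<equiv> root_delay p a b"
  assumes f: "\<not> (f1 \<and> f2)"
  shows "ennreal ((hider_potential a b q x f1 f2 - hider_potential_drop a b q x f1 f2 * progress_probability p x f1 f2)
      / (p * (real a + real b))) \<le> stage_expectation p a b \<sigma> (hider_value p a b) h"
proof -
  define W D \<pi> L where "W = hider_potential a b q x f1 f2" and "D = hider_potential_drop a b q x f1 f2"
    and "\<pi> = progress_probability p x f1 f2" and "L = real a + real b"
  have x: "- int b \<le> x" "x \<le> int a" "x = int a \<longrightarrow> f1" "x = - int b \<longrightarrow> f2"
    using h by (auto simp: search_invariant_def x_def f1_def f2_def)
  have D: "0 \<le> D" "D \<le> W"
    using hider_potential_drop_le[OF ab _ x] hider_potential_drop_nonneg root_delay_nonneg[OF p]
    by (simp_all add: W_def D_def q_def)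
  have pL: "0 < p * L"
    using p ab by (simp add: L_def)
  have "(W - D * \<pi>) / (p * L) = (W - D) / (p * L) * \<pi> + W / (p * L) * (1 - \<pi>)"
    by (simp add: diff_divide_distrib algebra_simps)
  also have "ennreal \<dots>
      = (\<integral>\<^sup>+A. ennreal (if progress_enabled x f1 f2 A then (W - D) / (p * L) else W / (p * L)) \<partial>activation p a b)"
    unfolding \<pi>_def using D p pL
    by (intro nn_integral_activation_progress[OF ab _ _ x f, symmetric]) simp_all
  also have "\<dots> = (\<integral>\<^sup>+A. ennreal ((W - D * of_bool (progress_enabled x f1 f2 A)) / (p * L)) \<partial>activation p a b)"
    by (intro nn_integral_cong) simp
  also have "\<dots> \<le> stage_expectation p a b \<sigma> (hider_value p a b) h"
    using hider_value_move[OF p ab h] \<sigma>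
    by (intro stage_expectation_ge) (auto simp: valid_strategy_def W_def D_def x_def f1_def f2_def q_def L_def)
  finally show ?thesis
    by (simp add: W_def D_def \<pi>_def L_def)
qed

lemma hider_value_step:
  assumes p: "0 < p" "p \<le> 1" and ab: "1 \<le> a" "1 \<le> b" and \<sigma>: "valid_strategy a b \<sigma>"
    and h: "search_invariant a b h"
  shows "hider_value p a b h \<le> hider_cost a b h + stage_expectation p a b \<sigma> (hider_value p a b) h"
proof -
  define x f1 f2 where "x = cur_pos h" and "f1 = traversed_in (int a - 1) h" and "f2 = traversed_in (- int b) h"
  define q L where "q = root_delay p a b" and "L = real a + real b"
  define W D \<pi> where "W = hider_potential a b q x f1 f2" and "D = hider_potential_drop a b q x f1 f2"
    and "\<pi> = progress_probability p x f1 f2"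
  show ?thesis
  proof (cases "f1 \<and> f2")
    case True
    then show ?thesis
      by (simp add: hider_value_def hider_potential_def f1_def f2_def)
  next
    case False
    have x: "- int b \<le> x" "x \<le> int a" "x = int a \<longrightarrow> f1" "x = - int b \<longrightarrow> f2"
      using h by (auto simp: search_invariant_def x_def f1_def f2_def)
    have "0 \<le> \<pi>" "\<pi> \<le> 1" "0 < p * L"
      using p ab one_minus_square_pos[OF p] by (auto simp: \<pi>_def progress_probability_def L_def)
    moreover have "0 \<le> D" "D \<le> W"
      using hider_potential_drop_le[OF ab _ x] hider_potential_drop_nonneg root_delay_nonneg[OF p]
      by (simp_all add: W_def D_def q_def)
    ultimately have "0 \<le> (W - D * \<pi>) / (p * L)"
      using mult_left_le[of \<pi> D] by (intro divide_nonneg_pos) simp_all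
    moreover have "D * \<pi> / (p * L) \<le> extremes_cost a b f1 f2"
      using expected_drop_le_extremes_cost[OF p ab False, of x] by (simp add: D_def q_def \<pi>_def L_def)
    then have "W / (p * L) \<le> extremes_cost a b f1 f2 + (W - D * \<pi>) / (p * L)"
      by (simp add: diff_divide_distrib)
    ultimately have "hider_value p a b h \<le> hider_cost a b h + ennreal ((W - D * \<pi>) / (p * L))"
      by (simp add: hider_value_def hider_cost_def W_def x_def f1_def f2_def q_def L_def extremes_cost_def
          ennreal_leI flip: ennreal_plus)
    also have "\<dots> \<le> hider_cost a b h + stage_expectation p a b \<sigma> (hider_value p a b) h"
      using hider_value_expectation_ge[OF p ab \<sigma> h] False
      by (intro add_left_mono) (simp add: W_def D_def \<pi>_def L_def x_def f1_def f2_def q_def)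
    finally show ?thesis .
  qed
qed

lemma hider_value_le_cost:
  assumes p: "0 < p" "p \<le> 1" and ab: "1 \<le> a" "1 \<le> b" and h: "search_invariant a b h"
  shows "hider_value p a b h
    \<le> ennreal (((real a + real b) * (real a + real b) + root_delay p a b) / p) * hider_cost a b h"
proof -
  define x f1 f2 where "x = cur_pos h" and "f1 = traversed_in (int a - 1) h" and "f2 = traversed_in (- int b) h"
  define q L where "q = root_delay p a b" and "L = real a + real b"
  have q: "0 \<le> q"
    using root_delay_nonneg[OF p] by (simp add: q_def)
  have x: "- int b \<le> x" "x \<le> int a"
    using h by (auto simp: search_invariant_def x_def)
  have L: "1 \<le> L" "1 \<le> real a" "1 \<le> real b"
    using ab by (auto simp: L_def)
  show ?thesis
  proof (cases "f1 \<and> f2")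
    case True
    then show ?thesis
      by (simp add: hider_value_def hider_potential_def f1_def f2_def)
  next
    case False
    have "1 / L \<le> real a / L" "1 / L \<le> real b / L" "0 \<le> real a / L" "0 \<le> real b / L"
      using L by (simp_all add: divide_right_mono)
    moreover have "extremes_cost a b f1 f2 = (if f1 then 0 else real a / L) + (if f2 then 0 else real b / L)"
      by (simp add: extremes_cost_def L_def)
    ultimately have "1 / L \<le> extremes_cost a b f1 f2"
      using False by (cases f1; cases f2) simp_all
    moreover have "0 \<le> (L * L + q) / p"
      using q p by simp
    ultimately have cost: "(L * L + q) / p * (1 / L) \<le> (L * L + q) / p * extremes_cost a b f1 f2"
      by (rule mult_left_mono)
    have "hider_potential a b q x f1 f2 / (p * L) \<le> (L * L + q) / (p * L)"
      using hider_potential_le[OF ab q x, of f1 f2] p L by (intro divide_right_mono) (simp_all add: L_def)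
    also have "\<dots> = (L * L + q) / p * (1 / L)"
      by simp
    finally have "ennreal (hider_potential a b q x f1 f2 / (p * L))
        \<le> ennreal ((L * L + q) / p * extremes_cost a b f1 f2)"
      using cost by (intro ennreal_leI) simp
    also have "\<dots> = ennreal ((L * L + q) / p) * ennreal (extremes_cost a b f1 f2)"
      using q p by (intro ennreal_mult') simp
    finally show ?thesis
      by (simp add: hider_value_def hider_cost_def x_def f1_def f2_def q_def L_def)
  qed
qed

lemma hider_value_Nil:
  assumes p: "0 < p" "p \<le> 1" and ab: "1 \<le> a" "1 \<le> b"
  shows "hider_value p a b [] = ennreal (real (a + b) / p + 1 / (1 - (1 - p)^2) - 1 / p)"
proof -
  define r L where "r = 1 - (1 - p)^2" and "L = real a + real b"
  have "0 < r" "1 \<le> L"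
    using one_minus_square_pos[OF p] ab by (simp_all add: r_def L_def)
  then have "(L * (L - 1) + L * p / r) / (p * L) = L / p + 1 / r - 1 / p"
    using p by (simp add: field_simps)
  then show ?thesis
    by (simp add: hider_value_def hider_potential_def root_delay_def r_def L_def)
qed

lemma set_pmf_extreme_hider: "1 \<le> a \<Longrightarrow> 1 \<le> b \<Longrightarrow> set_pmf (extreme_hider a b) \<subseteq> path_edges a b"
  by (auto simp: extreme_hider_def mem_path_edges)

lemma payoff_extreme_hider:
  assumes ab: "1 \<le> a" "1 \<le> b"
  shows "payoff p a b (extreme_hider a b) \<sigma> = (\<Sum>t. \<integral>\<^sup>+h. hider_cost a b h \<partial>run p a b \<sigma> t)"
proof -
  define L where "L = real a + real b"
  have "1 - real a / L = real b / L"
    using ab by (simp add: L_def field_simps)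
  have "payoff p a b (extreme_hider a b) \<sigma> = (\<integral>\<^sup>+e. search_time p a b \<sigma> e \<partial>extreme_hider a b)"
    by (rule payoff_eq_nn_integral[OF set_pmf_extreme_hider[OF ab]])
  also have "\<dots> = ennreal (real a / L) * search_time p a b \<sigma> (int a - 1)
      + ennreal (real b / L) * search_time p a b \<sigma> (- int b)"
    using ab \<open>1 - real a / L = real b / L\<close> by (simp add: extreme_hider_def L_def mult.commute)
  also have "\<dots> = (\<Sum>t. ennreal (real a / L) * (\<integral>\<^sup>+h. indicator {h. \<not> traversed_in (int a - 1) h} h \<partial>run p a b \<sigma> t)
      + ennreal (real b / L) * (\<integral>\<^sup>+h. indicator {h. \<not> traversed_in (- int b) h} h \<partial>run p a b \<sigma> t))"
    by (simp add: search_time_eq_suminf_nn_integral suminf_add[symmetric])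
  also have "\<dots> = (\<Sum>t. \<integral>\<^sup>+h. hider_cost a b h \<partial>run p a b \<sigma> t)"
  proof -
    have "hider_cost a b h = ennreal (real a / L) * indicator {h. \<not> traversed_in (int a - 1) h} h
        + ennreal (real b / L) * indicator {h. \<not> traversed_in (- int b) h} h" for h
      by (simp add: hider_cost_def extremes_cost_def L_def ennreal_plus)
    then show ?thesis
      by (simp add: nn_integral_add nn_integral_cmult)
  qed
  finally show ?thesis .
qed

theorem extreme_hider_payoff_ge:
  assumes p: "0 < p" "p \<le> 1" and ab: "1 \<le> a" "1 \<le> b" and \<sigma>: "valid_strategy a b \<sigma>"
  shows "ennreal (real (a + b) / p + 1 / (1 - (1 - p)^2) - 1 / p) \<le> payoff p a b (extreme_hider a b) \<sigma>"
proof -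
  have "hider_value p a b [] \<le> (\<Sum>t. \<integral>\<^sup>+h. hider_cost a b h \<partial>run p a b \<sigma> t)"
    by (rule potential_le_expected_cost[where R = "search_invariant a b"])
      (auto intro: search_invariant_run[OF ab \<sigma>] hider_value_step[OF p ab \<sigma>] hider_value_le_cost[OF p ab])
  then show ?thesis
    by (simp add: hider_value_Nil[OF p ab] payoff_extreme_hider[OF ab])
qed

section \<open>The uniform depth-first searcher\<close>

definition out_edges :: "nat \<Rightarrow> nat \<Rightarrow> int \<Rightarrow> int set" where
  "out_edges a b x = {e \<in> path_edges a b. parent_end e = x}"

lemma out_edges_eq:
  "out_edges a b x = (if 0 < x then (if x < int a then {x} else {}) else if x = 0 then {0, -1} \<inter> path_edges a b
     else (if - int b < x then {x - 1} else {}))"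
  by (auto simp: out_edges_def mem_path_edges parent_end_def)

lemma uniform_dfs_eq:
  "uniform_dfs a b h A =
    (let Out = out_edges a b (cur_pos h) - traversed_set a b h in
     if Out \<inter> A \<noteq> {} then map_pmf child_end (pmf_of_set (Out \<inter> A))
     else if Out \<noteq> {} then return_pmf (cur_pos h)
     else if \<exists>e \<in> path_edges a b \<inter> A. child_end e = cur_pos h
       then return_pmf (parent_end (THE e. e \<in> path_edges a b \<and> child_end e = cur_pos h))
     else return_pmf (cur_pos h))"
  by (simp add: uniform_dfs_def out_edges_def Let_def)

lemma child_end_inj: "child_end e = child_end e' \<Longrightarrow> e = e'"
  by (auto simp: child_end_def split: if_splits)

lemma crosses_parent_child: "crosses e (parent_end e) (child_end e)" "crosses e (child_end e) (parent_end e)"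
  by (auto simp: crosses_iff parent_end_def child_end_def)

lemma uniform_dfs_forward:
  assumes "out_edges a b (cur_pos h) - traversed_set a b h = {g}"
  shows "uniform_dfs a b h A = (if g \<in> A then return_pmf (child_end g) else return_pmf (cur_pos h))"
  using assms by (auto simp: uniform_dfs_eq Let_def pmf_of_set_singleton)

lemma the_child_end: "e \<in> path_edges a b \<Longrightarrow> (THE e'. e' \<in> path_edges a b \<and> child_end e' = child_end e) = e"
  by (auto intro: the_equality child_end_inj)

lemma uniform_dfs_backtrack:
  assumes "out_edges a b (cur_pos h) - traversed_set a b h = {}"
    and "g \<in> path_edges a b" and "child_end g = cur_pos h"
  shows "uniform_dfs a b h A = (if g \<in> A then return_pmf (parent_end g) else return_pmf (cur_pos h))"
proof -
  have "(\<exists>e \<in> path_edges a b \<inter> A. child_end e = cur_pos h) \<longleftrightarrow> g \<in> A"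
    using assms(2,3) by (metis Int_iff child_end_inj)
  then show ?thesis
    using assms(2,3) the_child_end[OF assms(2)] unfolding uniform_dfs_eq Let_def assms(1) by simp
qed

lemma uniform_dfs_finished:
  assumes "cur_pos h = 0" and "out_edges a b 0 \<subseteq> traversed_set a b h"
  shows "uniform_dfs a b h A = return_pmf 0"
proof -
  have "child_end e \<noteq> 0" for e
    by (simp add: child_end_def)
  then show ?thesis
    using assms by (auto simp: uniform_dfs_eq Let_def)
qed

lemma uniform_dfs_start:
  assumes ab: "1 \<le> a" "1 \<le> b" and h: "cur_pos h = 0" "traversed_set a b h = {}"
  shows "uniform_dfs a b h A =
    (if 0 \<in> A \<and> -1 \<in> A then pmf_of_set {1, -1}
     else if 0 \<in> A then return_pmf 1 else if -1 \<in> A then return_pmf (-1) else return_pmf 0)"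
proof -
  have out: "out_edges a b 0 = {0, -1}"
    using ab by (auto simp: out_edges_eq mem_path_edges)
  have "map_pmf child_end (pmf_of_set {0, -1}) = pmf_of_set (child_end ` {0, -1})"
    by (intro map_pmf_of_set_inj) (auto simp: child_end_def inj_on_def)
  also have "child_end ` {0, -1} = {1, -1}"
    by (auto simp: child_end_def)
  finally have "map_pmf child_end (pmf_of_set {0, -1}) = pmf_of_set {1, -1}" .
  moreover have "{0, -1} \<inter> A = (if 0 \<in> A \<and> -1 \<in> A then {0, -1} else if 0 \<in> A then {0} else if -1 \<in> A then {-1} else {})"
    by auto
  ultimately show ?thesis
    by (simp add: uniform_dfs_eq out h Let_def child_end_def pmf_of_set_singleton)
qed

lemma uniform_dfs_valid: "valid_strategy a b (uniform_dfs a b)"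
  unfolding valid_strategy_def
proof (intro allI ballI)
  fix h A v
  define u Out where "u = cur_pos h" and "Out = out_edges a b u - traversed_set a b h"
  assume "v \<in> set_pmf (uniform_dfs a b h A)"
  then have v: "v \<in> set_pmf (if Out \<inter> A \<noteq> {} then map_pmf child_end (pmf_of_set (Out \<inter> A))
     else if Out \<noteq> {} then return_pmf u
     else if \<exists>e \<in> path_edges a b \<inter> A. child_end e = u
       then return_pmf (parent_end (THE e. e \<in> path_edges a b \<and> child_end e = u))
     else return_pmf u)"
    unfolding uniform_dfs_eq Let_def u_def[symmetric] Out_def[symmetric] .
  have "finite Out"
    by (rule finite_subset[of _ "path_edges a b"]) (auto simp: Out_def out_edges_def)
  consider (forward) "Out \<inter> A \<noteq> {}" | (wait) "Out \<inter> A = {}" "Out \<noteq> {}"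
    | (backtrack) e where "Out = {}" "e \<in> path_edges a b" "e \<in> A" "child_end e = u"
    | (idle) "Out = {}" "\<not> (\<exists>e \<in> path_edges a b \<inter> A. child_end e = u)"
    by blast
  then show "legal_move a b A (cur_pos h) v"
  proof cases
    case forward
    then obtain e where "e \<in> Out" "e \<in> A" "v = child_end e"
      using v \<open>finite Out\<close> by auto
    then show ?thesis
      using crosses_parent_child(1)[of e] by (auto simp: legal_move_def Out_def out_edges_def u_def)
  next
    case (backtrack e)
    then have "\<exists>e' \<in> path_edges a b \<inter> A. child_end e' = u"
      by auto
    then have "v = parent_end e"
      using v backtrack the_child_end[of e a b] by simp
    then show ?thesis
      using backtrack crosses_parent_child(2)[of e] by (auto simp: legal_move_def u_def)
  qed (use v in \<open>auto simp: u_def legal_move_def\<close>)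
qed

text \<open>The depth-first tour that first enters side 1 (r) or side 2 (\<not> r) is a walk of length
  2 (a + b); these are the position and the set of traversed edges after its k-th step, and the
  edge crossed by its (k + 1)-st step.\<close>

definition dfs_state :: "nat \<Rightarrow> nat \<Rightarrow> bool \<Rightarrow> int \<Rightarrow> int \<times> int set" where
  "dfs_state a b r k = (if r then
      (if k \<le> int a then (k, {0..<k})
       else if k \<le> 2 * int a then (2 * int a - k, {0..<int a})
       else if k \<le> 2 * int a + int b then (2 * int a - k, {2 * int a - k..<int a})
       else (k - 2 * int a - 2 * int b, {- int b..<int a}))
    else
      (if k \<le> int b then (- k, {- k..<0})
       else if k \<le> 2 * int b then (k - 2 * int b, {- int b..<0})
       else if k \<le> 2 * int b + int a then (k - 2 * int b, {- int b..<k - 2 * int b})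
       else (2 * int a + 2 * int b - k, {- int b..<int a})))"

definition dfs_edge :: "nat \<Rightarrow> nat \<Rightarrow> bool \<Rightarrow> int \<Rightarrow> int" where
  "dfs_edge a b r k = (if r then
      (if k < int a then k else if k < 2 * int a + int b then 2 * int a - k - 1 else k - 2 * int a - 2 * int b)
    else
      (if k < int b then - k - 1 else if k < 2 * int b + int a then k - 2 * int b else 2 * int a + 2 * int b - k - 1))"

lemma dfs_state_step:
  fixes r :: bool
  assumes ab: "1 \<le> a" "1 \<le> b" and k: "1 \<le> k" "k < 2 * (int a + int b)"
  defines "x \<equiv> fst (dfs_state a b r k)" and "T \<equiv> snd (dfs_state a b r k)"
    and "x' \<equiv> fst (dfs_state a b r (k + 1))" and "g \<equiv> dfs_edge a b r k"
  shows "g \<in> path_edges a b \<and> snd (dfs_state a b r (k + 1)) = insert g T \<and> crosses g x x' \<and>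
    (out_edges a b x - T = {g} \<and> child_end g = x'
     \<or> out_edges a b x - T = {} \<and> child_end g = x \<and> parent_end g = x')"
proof (cases r)
  case True
  consider "k < int a" | "int a \<le> k" "k < 2 * int a" | "2 * int a \<le> k" "k < 2 * int a + int b"
    | "2 * int a + int b \<le> k"
    using k by linarith
  then show ?thesis
    using True ab k unfolding x_def T_def x'_def g_def
    by cases (auto simp: dfs_state_def dfs_edge_def out_edges_eq crosses_iff child_end_def parent_end_def mem_path_edges)
next
  case False
  consider "k < int b" | "int b \<le> k" "k < 2 * int b" | "2 * int b \<le> k" "k < 2 * int b + int a"
    | "2 * int b + int a \<le> k"
    using k by linarith
  then show ?thesis
    using False ab k unfolding x_def T_def x'_def g_def
    by cases (auto simp: dfs_state_def dfs_edge_def out_edges_eq crosses_iff child_end_def parent_end_def mem_path_edges)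
qed

lemma dfs_state_0: "dfs_state a b r 0 = (0, {})"
  by (simp add: dfs_state_def)

lemma dfs_state_1: "1 \<le> a \<Longrightarrow> 1 \<le> b \<Longrightarrow> dfs_state a b r 1 = (if r then (1, {0}) else (-1, {-1}))"
  by (auto simp: dfs_state_def)

lemma dfs_state_end: "1 \<le> a \<Longrightarrow> 1 \<le> b \<Longrightarrow> dfs_state a b r (2 * (int a + int b)) = (0, path_edges a b)"
  by (auto simp: dfs_state_def path_edges_def)

lemma dfs_state_eqD:
  assumes "(cur_pos h, traversed_set a b h) = dfs_state a b r k"
  shows "cur_pos h = fst (dfs_state a b r k)" "traversed_set a b h = snd (dfs_state a b r k)"
  using assms by (cases "dfs_state a b r k", simp)+

lemma crosses_unique: "crosses e u v \<Longrightarrow> crosses e' u v \<Longrightarrow> e = e'"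
  by (auto simp: crosses_iff)

lemma uniform_dfs_tour_step:
  fixes r :: bool
  assumes ab: "1 \<le> a" "1 \<le> b" and k: "1 \<le> k" "k < 2 * (int a + int b)"
    and h: "(cur_pos h, traversed_set a b h) = dfs_state a b r k"
  defines "x' \<equiv> fst (dfs_state a b r (k + 1))"
  shows "uniform_dfs a b h A = (if dfs_edge a b r k \<in> A then return_pmf x' else return_pmf (cur_pos h))"
    and "(cur_pos (h @ [(A, x')]), traversed_set a b (h @ [(A, x')])) = dfs_state a b r (k + 1)"
proof -
  define g where "g = dfs_edge a b r k"
  note x = dfs_state_eqD(1)[OF h] and T = dfs_state_eqD(2)[OF h]
  have g: "g \<in> path_edges a b" "snd (dfs_state a b r (k + 1)) = insert g (traversed_set a b h)"
    "crosses g (cur_pos h) x'"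
    and move: "out_edges a b (cur_pos h) - traversed_set a b h = {g} \<and> child_end g = x'
      \<or> out_edges a b (cur_pos h) - traversed_set a b h = {} \<and> child_end g = cur_pos h \<and> parent_end g = x'"
    using dfs_state_step[OF ab k, of r] unfolding x'_def[symmetric] g_def[symmetric] x[symmetric] T[symmetric]
    by blast+
  from move show "uniform_dfs a b h A = (if dfs_edge a b r k \<in> A then return_pmf x' else return_pmf (cur_pos h))"
    using uniform_dfs_forward[of a b h g A] uniform_dfs_backtrack[of a b h g A] g(1)
    unfolding g_def[symmetric] by argo
  have "{e \<in> path_edges a b. crosses e (cur_pos h) x'} = {g}"
    using g(1,3) crosses_unique by blast
  then show "(cur_pos (h @ [(A, x')]), traversed_set a b (h @ [(A, x')])) = dfs_state a b r (k + 1)"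
    using g(2) by (simp add: traversed_set_snoc prod_eq_iff x'_def)
qed

lemma uniform_dfs_tour_end:
  assumes ab: "1 \<le> a" "1 \<le> b" and h: "(cur_pos h, traversed_set a b h) = dfs_state a b r (2 * (int a + int b))"
  shows "uniform_dfs a b h A = return_pmf (cur_pos h)"
  using h dfs_state_end[OF ab] uniform_dfs_finished[of h a b A] by (simp add: out_edges_def)

lemma uniform_dfs_tour_start:
  assumes ab: "1 \<le> a" "1 \<le> b" and h: "(cur_pos h, traversed_set a b h) = dfs_state a b r 0"
  shows "uniform_dfs a b h A =
      (if 0 \<in> A \<and> -1 \<in> A then pmf_of_set {1, -1}
       else if 0 \<in> A then return_pmf 1 else if -1 \<in> A then return_pmf (-1) else return_pmf 0)"
    and "(cur_pos (h @ [(A, 1)]), traversed_set a b (h @ [(A, 1)])) = dfs_state a b True 1"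
    and "(cur_pos (h @ [(A, -1)]), traversed_set a b (h @ [(A, -1)])) = dfs_state a b False 1"
proof -
  have x: "cur_pos h = 0" and T: "traversed_set a b h = {}"
    using h by (auto simp: dfs_state_0)
  show "uniform_dfs a b h A =
      (if 0 \<in> A \<and> -1 \<in> A then pmf_of_set {1, -1}
       else if 0 \<in> A then return_pmf 1 else if -1 \<in> A then return_pmf (-1) else return_pmf 0)"
    by (rule uniform_dfs_start[OF ab x T])
  have "{e \<in> path_edges a b. crosses e 0 1} = {0}" "{e \<in> path_edges a b. crosses e 0 (-1)} = {-1}"
    using ab by (auto simp: crosses_iff mem_path_edges)
  then show "(cur_pos (h @ [(A, 1)]), traversed_set a b (h @ [(A, 1)])) = dfs_state a b True 1"
    and "(cur_pos (h @ [(A, -1)]), traversed_set a b (h @ [(A, -1)])) = dfs_state a b False 1"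
    using dfs_state_1[OF ab] by (simp_all add: traversed_set_snoc x T)
qed

definition dfs_invariant :: "nat \<Rightarrow> nat \<Rightarrow> history \<Rightarrow> bool" where
  "dfs_invariant a b h \<longleftrightarrow>
     (\<exists>r k. 0 \<le> k \<and> k \<le> 2 * (int a + int b) \<and> (cur_pos h, traversed_set a b h) = dfs_state a b r k)"

lemma dfs_invariant_snoc:
  assumes ab: "1 \<le> a" "1 \<le> b" and "dfs_invariant a b h" and v: "v \<in> set_pmf (uniform_dfs a b h A)"
  shows "dfs_invariant a b (h @ [(A, v)])"
proof -
  obtain r k where k: "0 \<le> k" "k \<le> 2 * (int a + int b)"
    and h: "(cur_pos h, traversed_set a b h) = dfs_state a b r k"
    using assms(3) by (auto simp: dfs_invariant_def)
  have stay: "dfs_invariant a b (h @ [(A, cur_pos h)])"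
    unfolding dfs_invariant_def using k h by auto
  consider "k = 0" | "1 \<le> k" "k < 2 * (int a + int b)" | "k = 2 * (int a + int b)"
    using k by linarith
  then show ?thesis
  proof cases
    case 1
    note start = uniform_dfs_tour_start[OF ab h[unfolded 1]]
    have "v = 1 \<or> v = -1 \<or> v = cur_pos h"
      using v h unfolding start(1) 1 by (auto simp: dfs_state_0 split: if_splits)
    moreover have "dfs_invariant a b (h @ [(A, 1)])"
      unfolding dfs_invariant_def using start(2) ab by (intro exI[of _ True] exI[of _ 1]) auto
    moreover have "dfs_invariant a b (h @ [(A, -1)])"
      unfolding dfs_invariant_def using start(3) ab by (intro exI[of _ False] exI[of _ 1]) auto
    ultimately show ?thesis
      using stay by auto
  next
    case 2
    note step = uniform_dfs_tour_step[OF ab 2 h]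
    have "v = fst (dfs_state a b r (k + 1)) \<or> v = cur_pos h"
      using v unfolding step(1) by (auto split: if_splits)
    moreover have "dfs_invariant a b (h @ [(A, fst (dfs_state a b r (k + 1)))])"
      unfolding dfs_invariant_def using step(2) 2 by (intro exI[of _ r] exI[of _ "k + 1"]) auto
    ultimately show ?thesis
      using stay by auto
  next
    case 3
    then show ?thesis
      using v stay uniform_dfs_tour_end[OF ab h[unfolded 3]] by simp
  qed
qed

lemma dfs_invariant_run:
  assumes ab: "1 \<le> a" "1 \<le> b" and "h \<in> set_pmf (run p a b (uniform_dfs a b) t)"
  shows "dfs_invariant a b h"
  using assms(3)
proof (rule run_invariant)
  show "dfs_invariant a b []"
    unfolding dfs_invariant_def by (intro exI[of _ True] exI[of _ 0]) (simp add: dfs_state_0 traversed_set_def)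
qed (rule dfs_invariant_snoc[OF ab])

definition dfs_first_traversal :: "nat \<Rightarrow> nat \<Rightarrow> bool \<Rightarrow> int \<Rightarrow> int" where
  "dfs_first_traversal a b r e =
     (if r then (if 0 \<le> e then e + 1 else 2 * int a - e) else (if e < 0 then - e else 2 * int b + e + 1))"

definition dfs_distance :: "nat \<Rightarrow> nat \<Rightarrow> int \<Rightarrow> int \<Rightarrow> int set \<Rightarrow> int" where
  "dfs_distance a b e x T =
     (if 0 \<le> e then (if x < 0 \<and> - int b \<notin> T then x + 2 * int b + e + 1 else e - x + 1)
      else (if 0 < x \<and> int a - 1 \<notin> T then 2 * int a - x - e else x - e))"

lemma dfs_first_traversal_bounds:
  "e \<in> path_edges a b \<Longrightarrow> 1 \<le> dfs_first_traversal a b r e \<and> dfs_first_traversal a b r e \<le> 2 * (int a + int b)"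
  by (auto simp: dfs_first_traversal_def mem_path_edges)

lemma dfs_state_traversed:
  assumes "1 \<le> a" "1 \<le> b" "0 \<le> k" "k \<le> 2 * (int a + int b)" "e \<in> path_edges a b"
  shows "e \<in> snd (dfs_state a b r k) \<longleftrightarrow> dfs_first_traversal a b r e \<le> k"
  using assms unfolding mem_path_edges by (cases r) (auto simp: dfs_state_def dfs_first_traversal_def)

lemma dfs_state_distance:
  assumes "1 \<le> a" "1 \<le> b" "1 \<le> k" "k \<le> 2 * (int a + int b)" "e \<in> path_edges a b"
    and "e \<notin> snd (dfs_state a b r k)"
  shows "dfs_distance a b e (fst (dfs_state a b r k)) (snd (dfs_state a b r k)) = dfs_first_traversal a b r e - k"
  using assms unfolding mem_path_edges
  by (cases r) (auto simp: dfs_state_def dfs_first_traversal_def dfs_distance_def split: if_splits)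

lemma dfs_state_nonempty:
  assumes "1 \<le> a" "1 \<le> b" "1 \<le> k" "k \<le> 2 * (int a + int b)"
  shows "snd (dfs_state a b r k) \<noteq> {}"
proof -
  have "(if r then 0 else -1) \<in> snd (dfs_state a b r k)"
    using assms by (cases r) (auto simp: dfs_state_def)
  then show ?thesis
    by auto
qed

text \<open>Expected number of stages until the uniform depth-first searcher traverses e, as a function
  of her position and traversed edges: each step of the tour waits 1/p stages for its edge to
  become active; at the start she waits 1/(1 - (1 - p)^2) stages for a root edge and then follows
  either tour with probability 1/2.\<close>

definition dfs_potential :: "real \<Rightarrow> nat \<Rightarrow> nat \<Rightarrow> int \<Rightarrow> int \<Rightarrow> int set \<Rightarrow> real" where
  "dfs_potential p a b e x T =
     (if e \<in> T then 0
      else if T = {} then 1 / (1 - (1 - p)^2)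
        + real_of_int (dfs_first_traversal a b True e - 1 + (dfs_first_traversal a b False e - 1)) / (2 * p)
      else real_of_int (dfs_distance a b e x T) / p)"

definition dfs_tour_potential :: "real \<Rightarrow> nat \<Rightarrow> nat \<Rightarrow> bool \<Rightarrow> int \<Rightarrow> int \<Rightarrow> real" where
  "dfs_tour_potential p a b r e k =
     (if dfs_first_traversal a b r e \<le> k then 0 else real_of_int (dfs_first_traversal a b r e - k) / p)"

lemma dfs_potential_state:
  assumes ab: "1 \<le> a" "1 \<le> b" and k: "1 \<le> k" "k \<le> 2 * (int a + int b)" and e: "e \<in> path_edges a b"
  shows "dfs_potential p a b e (fst (dfs_state a b r k)) (snd (dfs_state a b r k)) = dfs_tour_potential p a b r e k"
  using dfs_state_traversed[OF ab _ k(2) e] dfs_state_nonempty[OF ab k] dfs_state_distance[OF ab k e] k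
  by (simp add: dfs_potential_def dfs_tour_potential_def)

lemma dfs_tour_potential_nonneg: "0 < p \<Longrightarrow> 0 \<le> dfs_tour_potential p a b r e k"
  by (simp add: dfs_tour_potential_def)

definition dfs_value :: "real \<Rightarrow> nat \<Rightarrow> nat \<Rightarrow> int \<Rightarrow> history \<Rightarrow> ennreal" where
  "dfs_value p a b e h = ennreal (dfs_potential p a b e (cur_pos h) (traversed_set a b h))"

lemma dfs_value_stay [simp]: "dfs_value p a b e (h @ [(A, cur_pos h)]) = dfs_value p a b e h"
  by (simp add: dfs_value_def)

lemma dfs_value_tour:
  assumes "1 \<le> a" "1 \<le> b" "1 \<le> k" "k \<le> 2 * (int a + int b)" "e \<in> path_edges a b"
    and "(cur_pos h, traversed_set a b h) = dfs_state a b r k"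
  shows "dfs_value p a b e h = ennreal (dfs_tour_potential p a b r e k)"
  unfolding dfs_value_def dfs_state_eqD[OF assms(6)] dfs_potential_state[OF assms(1-5)] ..

lemma not_traversed_dfs_state:
  assumes "1 \<le> a" "1 \<le> b" "0 \<le> k" "k \<le> 2 * (int a + int b)" "e \<in> path_edges a b"
    and "(cur_pos h, traversed_set a b h) = dfs_state a b r k"
  shows "\<not> traversed_in e h \<longleftrightarrow> k < dfs_first_traversal a b r e"
proof -
  have "traversed_in e h \<longleftrightarrow> e \<in> snd (dfs_state a b r k)"
    using assms(5) dfs_state_eqD(2)[OF assms(6)] unfolding traversed_set_def by blast
  then show ?thesis
    using dfs_state_traversed[OF assms(1-5), of r] by (simp add: not_le)
qed

lemma dfs_value_step_tour:
  fixes r :: bool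
  assumes p: "0 < p" "p \<le> 1" and ab: "1 \<le> a" "1 \<le> b" and e: "e \<in> path_edges a b"
    and k: "1 \<le> k" "k < 2 * (int a + int b)" and h: "(cur_pos h, traversed_set a b h) = dfs_state a b r k"
  shows "indicator {h. \<not> traversed_in e h} h + stage_expectation p a b (uniform_dfs a b) (dfs_value p a b e) h
    \<le> dfs_value p a b e h"
proof -
  note step = uniform_dfs_tour_step[OF ab k h]
  define g x' where "g = dfs_edge a b r k" and "x' = fst (dfs_state a b r (k + 1))"
  define u0 u1 where "u0 = dfs_tour_potential p a b r e k" and "u1 = dfs_tour_potential p a b r e (k + 1)"
  have u: "0 \<le> u0" "0 \<le> u1"
    using p by (simp_all add: u0_def u1_def dfs_tour_potential_nonneg)
  have value_h: "dfs_value p a b e h = ennreal u0"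
    using dfs_value_tour[OF ab _ _ e h] k by (simp add: u0_def)
  have "dfs_value p a b e (h @ [(A, x')]) = ennreal u1" for A
    using dfs_value_tour[OF ab _ _ e step(2)[of A, folded x'_def]] k by (simp add: u1_def)
  then have "stage_expectation p a b (uniform_dfs a b) (dfs_value p a b e) h
      = (\<integral>\<^sup>+A. ennreal (if g \<in> A then u1 else u0) \<partial>activation p a b)"
    unfolding stage_expectation_def step(1) g_def[symmetric] x'_def[symmetric]
    by (intro nn_integral_cong) (simp add: value_h)
  also have "\<dots> = ennreal (u1 * p + u0 * (1 - p))"
    using nn_integral_activation_edge[of g a b p "\<lambda>u. if u then u1 else u0"] dfs_state_step[OF ab k, of r] p u
    by (simp add: g_def)
  finally have expectation: "stage_expectation p a b (uniform_dfs a b) (dfs_value p a b e) h = ennreal (u1 * p + u0 * (1 - p))" .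
  have cost: "indicator {h. \<not> traversed_in e h} h = ennreal (of_bool (k < dfs_first_traversal a b r e))"
    using not_traversed_dfs_state[OF ab _ _ e h] k by simp
  have "of_bool (k < dfs_first_traversal a b r e) + (u1 * p + u0 * (1 - p)) \<le> u0"
  proof (cases "k < dfs_first_traversal a b r e")
    case True
    then have "u0 = real_of_int (dfs_first_traversal a b r e - k) / p"
      "u1 = real_of_int (dfs_first_traversal a b r e - k - 1) / p"
      by (auto simp: u0_def u1_def dfs_tour_potential_def)
    then show ?thesis
      using True p by (simp add: field_simps)
  qed (simp add: u0_def u1_def dfs_tour_potential_def)
  then show ?thesis
    using u p by (simp add: expectation cost value_h ennreal_leI flip: ennreal_plus)
qed

lemma stage_expectation_uniform_dfs_start:
  assumes p: "0 \<le> p" "p \<le> 1" and ab: "1 \<le> a" "1 \<le> b"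
    and h: "(cur_pos h, traversed_set a b h) = dfs_state a b r 0"
    and f: "\<And>A. f (h @ [(A, 1)]) = ennreal u1" "\<And>A. f (h @ [(A, -1)]) = ennreal u2"
      "\<And>A. f (h @ [(A, 0)]) = ennreal u0"
    and u: "0 \<le> u0" "0 \<le> u1" "0 \<le> u2"
  shows "stage_expectation p a b (uniform_dfs a b) f h
    = ennreal ((u1 + u2) / 2 * (1 - (1 - p)^2) + u0 * (1 - p)^2)"
proof -
  note start = uniform_dfs_tour_start[OF ab h]
  have "ennreal ((u1 + u2) / 2) = ennreal (u1 + u2) / ennreal 2"
    using u by (intro divide_ennreal[symmetric]) auto
  then have "(\<integral>\<^sup>+v. f (h @ [(A, v)]) \<partial>pmf_of_set {1, -1}) = ennreal ((u1 + u2) / 2)" for A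
    using u by (simp add: nn_integral_pmf_of_set f flip: ennreal_plus)
  then have "stage_expectation p a b (uniform_dfs a b) f h
      = (\<integral>\<^sup>+A. ennreal (if 0 \<in> A \<and> -1 \<in> A then (u1 + u2) / 2
          else if 0 \<in> A then u1 else if -1 \<in> A then u2 else u0) \<partial>activation p a b)"
    unfolding stage_expectation_def start(1) by (intro nn_integral_cong) (simp add: f)
  also have "\<dots> = ennreal (((u1 + u2) / 2 * p + u1 * (1 - p)) * p + (u2 * p + u0 * (1 - p)) * (1 - p))"
    using nn_integral_activation_edge_pair[of 0 a b "-1" p
        "\<lambda>u w. if u \<and> w then (u1 + u2) / 2 else if u then u1 else if w then u2 else u0"] ab p u
    by (simp add: mem_path_edges)
  also have "\<dots> = ennreal ((u1 + u2) / 2 * (1 - (1 - p)^2) + u0 * (1 - p)^2)"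
    by (rule arg_cong[where f = ennreal]) (simp add: power2_eq_square field_simps)
  finally show ?thesis .
qed

lemma dfs_value_step_start:
  assumes p: "0 < p" "p \<le> 1" and ab: "1 \<le> a" "1 \<le> b" and e: "e \<in> path_edges a b"
    and h: "(cur_pos h, traversed_set a b h) = dfs_state a b r 0"
  shows "indicator {h. \<not> traversed_in e h} h + stage_expectation p a b (uniform_dfs a b) (dfs_value p a b e) h
    \<le> dfs_value p a b e h"
proof -
  note start = uniform_dfs_tour_start[OF ab h]
  have x: "cur_pos h = 0" and T: "traversed_set a b h = {}"
    using dfs_state_eqD[OF h] by (simp_all add: dfs_state_0)
  define \<rho> where "\<rho> = 1 - (1 - p)^2"
  define U0 U1 U2 where "U0 = dfs_potential p a b e 0 {}"
    and "U1 = dfs_tour_potential p a b True e 1" and "U2 = dfs_tour_potential p a b False e 1"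
  have U: "0 \<le> U1" "0 \<le> U2"
    using p by (simp_all add: U1_def U2_def dfs_tour_potential_nonneg)
  have "U1 = real_of_int (dfs_first_traversal a b True e - 1) / p"
    "U2 = real_of_int (dfs_first_traversal a b False e - 1) / p"
    using dfs_first_traversal_bounds[OF e, of True] dfs_first_traversal_bounds[OF e, of False]
    by (auto simp: U1_def U2_def dfs_tour_potential_def)
  then have average: "(U1 + U2) / 2 = U0 - 1 / \<rho>"
    using p by (simp add: U0_def dfs_potential_def \<rho>_def field_simps)
  have \<rho>: "0 < \<rho>" "\<rho> \<le> 1"
    using one_minus_square_pos[OF p] by (simp_all add: \<rho>_def)
  have U0: "0 \<le> U0"
    using average U \<rho> by (smt (verit) divide_nonneg_pos)
  have value_h: "dfs_value p a b e h = ennreal U0"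
    by (simp add: dfs_value_def x T U0_def)
  have "dfs_value p a b e (h @ [(A, 1)]) = ennreal U1" "dfs_value p a b e (h @ [(A, -1)]) = ennreal U2"
    "dfs_value p a b e (h @ [(A, 0)]) = ennreal U0" for A
    using dfs_value_tour[OF ab _ _ e start(2)] dfs_value_tour[OF ab _ _ e start(3)] ab value_h x
    by (simp_all add: U1_def U2_def flip: x)
  then have expectation: "stage_expectation p a b (uniform_dfs a b) (dfs_value p a b e) h
      = ennreal ((U1 + U2) / 2 * \<rho> + U0 * (1 - \<rho>))"
    using stage_expectation_uniform_dfs_start[OF _ _ ab h] p U U0 by (simp add: \<rho>_def)
  have "U0 = 1 + ((U1 + U2) / 2 * \<rho> + U0 * (1 - \<rho>))"
    using \<rho> by (simp add: average algebra_simps)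
  moreover have "0 \<le> (U1 + U2) / 2 * \<rho> + U0 * (1 - \<rho>)"
    using U U0 \<rho> by (intro add_nonneg_nonneg mult_nonneg_nonneg) auto
  ultimately have "ennreal U0 = 1 + ennreal ((U1 + U2) / 2 * \<rho> + U0 * (1 - \<rho>))"
    by (metis ennreal_1 ennreal_plus zero_le_one)
  moreover have "indicator {h. \<not> traversed_in e h} h = (1 :: ennreal)"
    using e T by (simp add: traversed_set_def)
  ultimately show ?thesis
    by (simp add: expectation value_h)
qed

lemma dfs_value_step:
  assumes p: "0 < p" "p \<le> 1" and ab: "1 \<le> a" "1 \<le> b" and e: "e \<in> path_edges a b"
    and h: "dfs_invariant a b h"
  shows "indicator {h. \<not> traversed_in e h} h + stage_expectation p a b (uniform_dfs a b) (dfs_value p a b e) h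
    \<le> dfs_value p a b e h"
proof -
  obtain r k where k: "0 \<le> k" "k \<le> 2 * (int a + int b)"
    and hk: "(cur_pos h, traversed_set a b h) = dfs_state a b r k"
    using h by (auto simp: dfs_invariant_def)
  consider "k = 0" | "1 \<le> k" "k < 2 * (int a + int b)" | "k = 2 * (int a + int b)"
    using k by linarith
  then show ?thesis
  proof cases
    case 1
    show ?thesis
      by (rule dfs_value_step_start[OF p ab e hk[unfolded 1]])
  next
    case 2
    show ?thesis
      by (rule dfs_value_step_tour[OF p ab e 2 hk])
  next
    case 3
    then have "e \<in> traversed_set a b h"
      using dfs_state_eqD(2)[OF hk] dfs_state_end[OF ab] e by simp
    then have "dfs_value p a b e h = 0" "traversed_in e h"
      by (simp_all add: dfs_value_def dfs_potential_def traversed_set_def)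
    moreover have "stage_expectation p a b (uniform_dfs a b) (dfs_value p a b e) h = dfs_value p a b e h"
      using uniform_dfs_tour_end[OF ab hk[unfolded 3]] by (simp add: stage_expectation_def)
    ultimately show ?thesis
      by simp
  qed
qed

theorem search_time_uniform_dfs_le:
  assumes p: "0 < p" "p \<le> 1" and ab: "1 \<le> a" "1 \<le> b" and e: "e \<in> path_edges a b"
  shows "search_time p a b (uniform_dfs a b) e \<le> ennreal (real (a + b) / p + 1 / (1 - (1 - p)^2) - 1 / p)"
proof -
  have "search_time p a b (uniform_dfs a b) e = (\<Sum>t. \<integral>\<^sup>+h. indicator {h. \<not> traversed_in e h} h \<partial>run p a b (uniform_dfs a b) t)"
    by (rule search_time_eq_suminf_nn_integral)
  also have "\<dots> \<le> dfs_value p a b e []"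
    by (rule expected_cost_le_potential[where R = "dfs_invariant a b"])
      (auto intro: dfs_invariant_run[OF ab] dfs_value_step[OF p ab e])
  also have "\<dots> \<le> ennreal (real (a + b) / p + 1 / (1 - (1 - p)^2) - 1 / p)"
    unfolding dfs_value_def
  proof (intro ennreal_leI)
    have "dfs_first_traversal a b True e - 1 + (dfs_first_traversal a b False e - 1) \<le> 2 * (int a + int b - 1)"
      using e by (auto simp: dfs_first_traversal_def mem_path_edges)
    then have "real_of_int (dfs_first_traversal a b True e - 1 + (dfs_first_traversal a b False e - 1))
        \<le> 2 * (real (a + b) - 1)"
      by (simp only: of_int_le_iff[symmetric, where 'a = real]) simp
    then have "real_of_int (dfs_first_traversal a b True e - 1 + (dfs_first_traversal a b False e - 1)) / (2 * p)
        \<le> 2 * (real (a + b) - 1) / (2 * p)"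
      using p by (intro divide_right_mono) auto
    also have "\<dots> = (real (a + b) - 1) / p"
      by (rule mult_divide_mult_cancel_left) simp
    finally show "dfs_potential p a b e (cur_pos []) (traversed_set a b []) \<le> real (a + b) / p + 1 / (1 - (1 - p)^2) - 1 / p"
      by (simp add: dfs_potential_def traversed_set_def diff_divide_distrib)
  qed
  finally show ?thesis .
qed

section \<open>The value of the game\<close>

lemma payoff_uniform_dfs_le:
  assumes p: "0 < p" "p \<le> 1" and ab: "1 \<le> a" "1 \<le> b" and \<eta>: "\<eta> \<in> hider_strategies a b"
  shows "payoff p a b \<eta> (uniform_dfs a b) \<le> ennreal (real (a + b) / p + 1 / (1 - (1 - p)^2) - 1 / p)"
proof -
  have \<eta>: "set_pmf \<eta> \<subseteq> path_edges a b"
    using \<eta> by (simp add: hider_strategies_def)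
  then have "payoff p a b \<eta> (uniform_dfs a b)
      \<le> (\<integral>\<^sup>+e. ennreal (real (a + b) / p + 1 / (1 - (1 - p)^2) - 1 / p) \<partial>\<eta>)"
    unfolding payoff_eq_nn_integral[OF \<eta>]
    by (intro nn_integral_mono_AE AE_pmfI search_time_uniform_dfs_le[OF p ab]) auto
  then show ?thesis
    by (simp add: measure_pmf.emeasure_space_1)
qed

lemma saddle_point_value:
  fixes f :: "'h \<Rightarrow> 's \<Rightarrow> 'a :: complete_lattice"
  assumes "h0 \<in> H" "s0 \<in> S" "\<And>s. s \<in> S \<Longrightarrow> v \<le> f h0 s" "\<And>h. h \<in> H \<Longrightarrow> f h s0 \<le> v"
  shows "(SUP h\<in>H. INF s\<in>S. f h s) = v" and "(INF s\<in>S. SUP h\<in>H. f h s) = v"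
proof -
  have "(SUP h\<in>H. INF s\<in>S. f h s) \<le> (INF s\<in>S. SUP h\<in>H. f h s)"
    by (rule SUP_least, rule INF_greatest) (blast intro: INF_lower2 SUP_upper2 order_refl)
  moreover have "v \<le> (SUP h\<in>H. INF s\<in>S. f h s)"
    using assms(1,3) by (blast intro: SUP_upper2 INF_greatest)
  moreover have "(INF s\<in>S. SUP h\<in>H. f h s) \<le> v"
    using assms(2,4) by (blast intro: INF_lower2 SUP_least)
  ultimately show "(SUP h\<in>H. INF s\<in>S. f h s) = v" and "(INF s\<in>S. SUP h\<in>H. f h s) = v"
    by (blast intro: antisym order_trans)+
qed

theorem mainTheorem12:
  fixes p :: real and a b :: nat
  assumes "0 < p" and "p \<le> 1" and "1 \<le> a" and "1 \<le> b"
  defines "v \<equiv> ennreal (real (a + b) / p + 1 / (1 - (1 - p)^2) - 1 / p)"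
  shows "game_value p a b v
       \<and> hider_optimal p a b v (extreme_hider a b)
       \<and> searcher_optimal p a b v (uniform_dfs a b)"
proof -
  note p = assms(1,2) and ab = assms(3,4)
  have hider: "extreme_hider a b \<in> hider_strategies a b"
    using set_pmf_extreme_hider[OF ab] by (simp add: hider_strategies_def)
  note hider_bound = extreme_hider_payoff_ge[OF p ab, folded v_def]
    and searcher_bound = payoff_uniform_dfs_le[OF p ab, folded v_def]
  note saddle = saddle_point_value[of "extreme_hider a b" "hider_strategies a b" "uniform_dfs a b"
      "Collect (valid_strategy a b)" v "\<lambda>\<eta> \<sigma>. payoff p a b \<eta> \<sigma>"]
  show ?thesis
    using saddle hider hider_bound searcher_bound uniform_dfs_valid
    unfolding game_value_def lower_value_def upper_value_def hider_optimal_def searcher_optimal_def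
    by auto
qed

end
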